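(* Let $m\ge 2$ be an integer with smallest prime factor $p$, and let $k$ and $d$ be positive integers such that $d<\tfrac{p(m-1)}{m(m-k)}$ (equivalently $d\,m(m-k)<p(m-1)$). Let $S\subseteq\{0,1,\dots,m-1\}$ with $|S|=k$ and let $A=S+m\mathbb{Z}=\{s+mn: s\in S,\ n\in\mathbb{Z}\}$. Then \[h(A^d)\le k^d.\]
   Context: For a set $X\subseteq\mathbb{R}^d$, the Helly number $h(X)$ is the smallest $h$ such that the following holds: for every finite family $\mathcal{F}$ of convex sets in $\mathbb{R}^d$, if every $h$ or fewer sets of $\mathcal{F}$ have a point of $X$ in their intersection, then the intersection of all sets of $\mathcal{F}$ contains a point of $X$. If no such $h$ exists, $h(X)=\infty$. $A^d$ denotes the $d$-fold Cartesian product of $A$. *)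

theory Defs
  imports "HOL-Analysis.Analysis" "HOL-Library.Extended_Nat"
begin

definition helly_prop :: "'a::real_vector set \<Rightarrow> nat \<Rightarrow> bool" where
  "helly_prop X h \<longleftrightarrow>
     (\<forall>F. finite F \<and> (\<forall>C\<in>F. convex C) \<and>
          (\<forall>G. G \<subseteq> F \<and> card G \<le> h \<longrightarrow> \<Inter>G \<inter> X \<noteq> {})
          \<longrightarrow> \<Inter>F \<inter> X \<noteq> {})"

text \<open>Helly number: least such h, or infinity if none exists.\<close>
definition helly_number :: "'a::real_vector set \<Rightarrow> enat" where
  "helly_number X = Inf {enat h | h. helly_prop X h}"

text \<open>d-fold Cartesian power of a set of reals, d = CARD('n).\<close>
definition cart_power :: "real set \<Rightarrow> (real ^ 'n) set" where
  "cart_power A = {x. \<forall>i. x $ i \<in> A}"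

end

theory Submission
  imports Defs
begin

(* Call a colouring of X a segment colouring if any two distinct points of X of the same colour
   have a point of X strictly between them.  If a finite set W has a segment colouring with N
   colours, then every family of convex sets without a common point in W has a subfamily of at
   most N members without a common point in W: separating each point of W from a member missing it covers W by
   open halfspaces; take a minimal subcover and shrink its halfspaces as far as possible.  Each
   remaining halfspace then has a point of W on its boundary lying outside all the others, and
   two such points of the same colour would leave the point of W between them uncovered.  For a
   discrete X this gives h(X) <= N, applied to the finite part of X in the convex hull of
   witnesses for all subfamilies of at most N sets.

   For A = S + mZ, colour x in A^d by its coordinates mod m: there are k^d colours.  If x and y
   have the same colour, then y - x = m c with c integral, and x + (j/m)(y - x) has coordinates
   x_i + j c_i.  For fixed i with m not dividing c_i, the j in [0, m) for which x_i + j c_i lies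
   in a given residue class are congruent modulo m / gcd(c_i, m) >= p, so at most (m - k) m / p
   values of j are bad for coordinate i.  The bound d m (m - k) < p (m - 1) leaves some j in
   [1, m) good for all coordinates at once. *)

definition segment_coloring :: "'a::real_vector set \<Rightarrow> ('a \<Rightarrow> 'c) \<Rightarrow> bool" where
  "segment_coloring X cls \<longleftrightarrow>
     (\<forall>x\<in>X. \<forall>y\<in>X. x \<noteq> y \<and> cls x = cls y \<longrightarrow> open_segment x y \<inter> X \<noteq> {})"

lemma segment_coloring_Int_convex:
  assumes "segment_coloring X cls" and "convex C"
  shows "segment_coloring (X \<inter> C) cls"
  unfolding segment_coloring_def
proof (intro ballI impI)
  fix x y assume xy: "x \<in> X \<inter> C" "y \<in> X \<inter> C" "x \<noteq> y \<and> cls x = cls y"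
  then obtain z where z: "z \<in> open_segment x y" "z \<in> X"
    using assms(1) by (auto simp: segment_coloring_def)
  have "z \<in> C"
    using closed_segment_subset[of x C y] xy assms(2) open_closed_segment[OF z(1)] by blast
  then show "open_segment x y \<inter> (X \<inter> C) \<noteq> {}"
    using z by blast
qed

lemma exists_tight_thresholds:
  fixes W :: "'a::real_inner set" and u :: "'j \<Rightarrow> 'a" and g0 :: "'j \<Rightarrow> real"
  assumes "finite W" and "finite I"
    and cover0: "W \<subseteq> (\<Union>j\<in>I. {x. inner (u j) x \<le> g0 j})"
    and sep0: "\<And>i. i \<in> I \<Longrightarrow> \<exists>w\<in>W. \<forall>j\<in>I - {i}. g0 j < inner (u j) w"
  obtains g where "W \<subseteq> (\<Union>j\<in>I. {x. inner (u j) x \<le> g j})"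
    and "\<And>i. i \<in> I \<Longrightarrow> \<exists>z\<in>W. inner (u i) z = g i \<and> (\<forall>j\<in>I - {i}. g j < inner (u j) z)"
proof -
  \<comment> \<open>Thresholds range over the finite set V, so a cover with least threshold sum exists.\<close>
  define V where "V = g0 ` I \<union> (\<lambda>(j, w). inner (u j) w) ` (I \<times> W)"
  define \<Gamma> where "\<Gamma> = {g \<in> I \<rightarrow>\<^sub>E V.
    (\<forall>j\<in>I. g j \<le> g0 j) \<and> W \<subseteq> (\<Union>j\<in>I. {x. inner (u j) x \<le> g j})}"
  have "finite \<Gamma>"
    using assms(1,2) by (simp add: \<Gamma>_def V_def finite_PiE)
  moreover have "restrict g0 I \<in> \<Gamma>"
    using cover0 by (auto simp: \<Gamma>_def V_def)
  ultimately obtain g where "g \<in> \<Gamma>" and g_min: "\<And>g'. g' \<in> \<Gamma> \<Longrightarrow> sum g I \<le> sum g' I"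
    using ex_is_arg_min_if_finite[of \<Gamma> "\<lambda>g. sum g I"] by (auto simp: is_arg_min_linorder)
  then have g_V: "g \<in> I \<rightarrow>\<^sub>E V" and g_le: "\<And>j. j \<in> I \<Longrightarrow> g j \<le> g0 j"
    and cover: "W \<subseteq> (\<Union>j\<in>I. {x. inner (u j) x \<le> g j})"
    by (auto simp: \<Gamma>_def)
  have "\<exists>z\<in>W. inner (u i) z = g i \<and> (\<forall>j\<in>I - {i}. g j < inner (u j) z)" if "i \<in> I" for i
  proof -
    define T where "T = {w \<in> W. \<forall>j\<in>I - {i}. g j < inner (u j) w}"
    have "T \<noteq> {}"
      using sep0[OF \<open>i \<in> I\<close>] g_le by (force simp: T_def)
    moreover have "finite T"
      using assms(1) by (simp add: T_def)
    ultimately obtain z where "z \<in> T" and z_max: "\<And>w. w \<in> T \<Longrightarrow> inner (u i) w \<le> inner (u i) z"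
      using ex_is_arg_min_if_finite[of T "\<lambda>w. - inner (u i) w"] by (auto simp: is_arg_min_linorder)
    have T_below: "inner (u i) w \<le> g i" if "w \<in> T" for w
      using cover that by (force simp: T_def)
    have "\<not> inner (u i) z < g i"
    proof
      assume less: "inner (u i) z < g i"
      define g' where "g' = g(i := inner (u i) z)"
      have "W \<subseteq> (\<Union>j\<in>I. {x. inner (u j) x \<le> g' j})"
      proof
        fix w assume "w \<in> W"
        show "w \<in> (\<Union>j\<in>I. {x. inner (u j) x \<le> g' j})"
        proof (cases "w \<in> T")
          case True
          then show ?thesis using z_max \<open>i \<in> I\<close> by (auto simp: g'_def)
        next
          case False
          then show ?thesis using \<open>w \<in> W\<close> by (force simp: T_def g'_def not_less)
        qed
      qed
      moreover have "inner (u i) z \<in> V"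
        using \<open>z \<in> T\<close> \<open>i \<in> I\<close> by (auto simp: V_def T_def)
      moreover have "inner (u i) z \<le> g0 i"
        using less g_le[OF \<open>i \<in> I\<close>] by linarith
      ultimately have "g' \<in> \<Gamma>"
        using g_V g_le \<open>i \<in> I\<close> by (auto simp: \<Gamma>_def g'_def PiE_def extensional_def)
      moreover have "sum g' I = sum g I - (g i - inner (u i) z)"
        using \<open>i \<in> I\<close> assms(2) by (simp add: g'_def sum.If_cases sum.remove Diff_eq)
      ultimately show False
        using g_min less by fastforce
    qed
    then show ?thesis
      using \<open>z \<in> T\<close> T_below[OF \<open>z \<in> T\<close>] by (auto simp: T_def)
  qed
  with cover show thesis by (rule that)
qed

lemma inner_open_segment_gt:
  fixes x y z :: "'a::real_inner"
  assumes "z \<in> open_segment x y" and "c \<le> inner u x" and "c \<le> inner u y"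
    and "c < inner u x \<or> c < inner u y"
  shows "c < inner u z"
proof -
  obtain t where t: "0 < t" "t < 1" and z: "z = (1 - t) *\<^sub>R x + t *\<^sub>R y"
    using assms(1) by (auto simp: in_segment)
  have "inner u z = (1 - t) * inner u x + t * inner u y"
    by (simp add: z inner_add_right)
  moreover have "(1 - t) * c + t * c < (1 - t) * inner u x + t * inner u y"
    using assms(2-4) t by (auto intro: add_less_le_mono add_le_less_mono mult_left_mono mult_strict_left_mono)
  ultimately show ?thesis
    by (simp add: algebra_simps)
qed

lemma card_le_if_tight_thresholds:
  fixes W :: "'a::real_inner set" and u :: "'j \<Rightarrow> 'a"
  assumes "finite W" and "segment_coloring W cls" and "card (cls ` W) \<le> N"
    and cover: "W \<subseteq> (\<Union>j\<in>I. {x. inner (u j) x \<le> g j})"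
    and tight: "\<And>i. i \<in> I \<Longrightarrow> \<exists>z\<in>W. inner (u i) z = g i \<and> (\<forall>j\<in>I - {i}. g j < inner (u j) z)"
  shows "card I \<le> N"
proof (rule ccontr)
  assume "\<not> card I \<le> N"
  obtain z where zW: "\<And>i. i \<in> I \<Longrightarrow> z i \<in> W"
    and z_eq: "\<And>i. i \<in> I \<Longrightarrow> inner (u i) (z i) = g i"
    and z_gt: "\<And>i j. i \<in> I \<Longrightarrow> j \<in> I - {i} \<Longrightarrow> g j < inner (u j) (z i)"
    using tight by metis
  have z_ge: "g j \<le> inner (u j) (z i)" if "i \<in> I" "j \<in> I" for i j
    using z_eq z_gt that by (cases "i = j") (auto intro: less_imp_le)
  have "card ((cls \<circ> z) ` I) \<le> card (cls ` W)"
    using zW \<open>finite W\<close> by (intro card_mono) auto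
  with \<open>\<not> card I \<le> N\<close> \<open>card (cls ` W) \<le> N\<close> have "\<not> inj_on (cls \<circ> z) I"
    using card_image by fastforce
  then obtain i i' where ii': "i \<in> I" "i' \<in> I" "i \<noteq> i'" "cls (z i) = cls (z i')"
    unfolding inj_on_def by auto
  have "z i \<noteq> z i'"
    using z_eq[of i] z_gt[of i' i] ii' by auto
  with \<open>segment_coloring W cls\<close> zW ii' obtain y where y: "y \<in> open_segment (z i) (z i')" "y \<in> W"
    unfolding segment_coloring_def by blast
  then obtain j where "j \<in> I" and "inner (u j) y \<le> g j"
    using cover by auto
  moreover have "g j < inner (u j) y"
    using \<open>j \<in> I\<close> ii' z_gt[of i j] z_gt[of i' j]
    by (intro inner_open_segment_gt[OF y(1)] z_ge) auto
  ultimately show False by simp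
qed

lemma open_halfspace_cover_small_subcover:
  fixes W :: "'a::real_inner set" and u :: "'j \<Rightarrow> 'a"
  assumes "finite W" and "segment_coloring W cls" and "card (cls ` W) \<le> N"
    and "finite J" and "W \<subseteq> (\<Union>j\<in>J. {x. inner (u j) x < b j})"
  obtains I where "I \<subseteq> J" and "card I \<le> N" and "W \<subseteq> (\<Union>j\<in>I. {x. inner (u j) x < b j})"
proof -
  define covers where "covers I \<longleftrightarrow> I \<subseteq> J \<and> W \<subseteq> (\<Union>j\<in>I. {x. inner (u j) x < b j})" for I
  obtain I where "covers I" and I_min: "\<And>I'. covers I' \<Longrightarrow> card I \<le> card I'"
    using ex_has_least_nat[of covers J card] assms(5) by (auto simp: covers_def)
  then have "I \<subseteq> J" and cover: "W \<subseteq> (\<Union>j\<in>I. {x. inner (u j) x < b j})"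
    by (auto simp: covers_def)
  have "finite I"
    using \<open>I \<subseteq> J\<close> \<open>finite J\<close> by (rule finite_subset)
  have sep: "\<exists>w\<in>W. \<forall>j\<in>I - {i}. b j \<le> inner (u j) w" if "i \<in> I" for i
  proof (rule ccontr)
    assume "\<not> ?thesis"
    then have "covers (I - {i})"
      using \<open>I \<subseteq> J\<close> by (force simp: covers_def not_le)
    then have "card I \<le> card (I - {i})"
      by (rule I_min)
    with card_Diff1_less[OF \<open>finite I\<close> \<open>i \<in> I\<close>] show False
      by linarith
  qed
  \<comment> \<open>The dummy value b j - 1 only keeps Max defined when no point of W lies below b j.\<close>
  define g0 where "g0 j = Max (insert (b j - 1) {inner (u j) w | w. w \<in> W \<and> inner (u j) w < b j})" for j
  have fin: "finite {inner (u j) w | w. w \<in> W \<and> inner (u j) w < b j}" for j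
    using \<open>finite W\<close> by simp
  have g0_less: "g0 j < b j" for j
    using fin[of j] by (auto simp: g0_def)
  have cover0: "W \<subseteq> (\<Union>j\<in>I. {x. inner (u j) x \<le> g0 j})"
  proof
    fix w assume "w \<in> W"
    then obtain j where "j \<in> I" "inner (u j) w < b j"
      using cover by auto
    then have "inner (u j) w \<le> g0 j"
      using fin[of j] \<open>w \<in> W\<close> unfolding g0_def by (intro Max_ge) auto
    with \<open>j \<in> I\<close> show "w \<in> (\<Union>j\<in>I. {x. inner (u j) x \<le> g0 j})" by blast
  qed
  have sep0: "\<exists>w\<in>W. \<forall>j\<in>I - {i}. g0 j < inner (u j) w" if "i \<in> I" for i
    using sep[OF that] by (blast intro: order_less_le_trans[OF g0_less])
  obtain g where "W \<subseteq> (\<Union>j\<in>I. {x. inner (u j) x \<le> g j})"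
    and "\<And>i. i \<in> I \<Longrightarrow> \<exists>z\<in>W. inner (u i) z = g i \<and> (\<forall>j\<in>I - {i}. g j < inner (u j) z)"
    using exists_tight_thresholds[OF \<open>finite W\<close> \<open>finite I\<close> cover0 sep0] by blast
  then have "card I \<le> N"
    by (rule card_le_if_tight_thresholds[OF assms(1-3)])
  with \<open>I \<subseteq> J\<close> cover show thesis by (blast intro: that)
qed

lemma separating_hyperplane_convex_Int_finite:
  fixes w :: "'a::euclidean_space"
  assumes "finite Q" and "convex C" and "w \<notin> C"
  obtains a b where "inner a w < b" and "\<And>x. x \<in> C \<inter> Q \<Longrightarrow> b < inner a x"
proof -
  have "closed (convex hull (C \<inter> Q))"
    using \<open>finite Q\<close> by (intro compact_imp_closed finite_imp_compact_convex_hull) auto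
  moreover have "w \<notin> convex hull (C \<inter> Q)"
    using hull_minimal[of "C \<inter> Q" C convex] \<open>convex C\<close> \<open>w \<notin> C\<close> by blast
  ultimately obtain a b where "inner a w < b" and far: "\<forall>x\<in>convex hull (C \<inter> Q). b < inner a x"
    using separating_hyperplane_closed_point[OF convex_convex_hull] by blast
  moreover have "x \<in> convex hull (C \<inter> Q)" if "x \<in> C \<inter> Q" for x
    using that by (rule hull_inc)
  ultimately show thesis
    using that by blast
qed

lemma helly_finite_segment_coloring:
  fixes W :: "'a::euclidean_space set" and F :: "'a set set"
  assumes "finite W" and "segment_coloring W cls" and "card (cls ` W) \<le> N"
    and convex: "\<forall>C\<in>F. convex C" and "\<Inter>F \<inter> W = {}"
  obtains G where "G \<subseteq> F" and "card G \<le> N" and "\<Inter>G \<inter> W = {}"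
proof -
  have "\<exists>C a b. C \<in> F \<and> inner a w < b \<and> (\<forall>x\<in>C \<inter> W. b < inner a x)" if "w \<in> W" for w
  proof -
    obtain C where "C \<in> F" and "w \<notin> C"
      using \<open>\<Inter>F \<inter> W = {}\<close> \<open>w \<in> W\<close> by blast
    moreover obtain a b where "inner a w < b" and "\<And>x. x \<in> C \<inter> W \<Longrightarrow> b < inner a x"
      using separating_hyperplane_convex_Int_finite[OF \<open>finite W\<close> _ \<open>w \<notin> C\<close>] convex \<open>C \<in> F\<close>
      by blast
    ultimately show ?thesis
      by blast
  qed
  then obtain C a b where C: "\<And>w. w \<in> W \<Longrightarrow> C w \<in> F"
    and near: "\<And>w. w \<in> W \<Longrightarrow> inner (a w) w < b w"
    and far: "\<And>w x. w \<in> W \<Longrightarrow> x \<in> C w \<inter> W \<Longrightarrow> b w < inner (a w) x"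
    by metis
  have "W \<subseteq> (\<Union>w\<in>W. {x. inner (a w) x < b w})"
    using near by blast
  then obtain I where "I \<subseteq> W" and "card I \<le> N" and cover: "W \<subseteq> (\<Union>w\<in>I. {x. inner (a w) x < b w})"
    using open_halfspace_cover_small_subcover[OF assms(1-3) \<open>finite W\<close>] by blast
  show thesis
  proof (rule that)
    show "C ` I \<subseteq> F"
      using C \<open>I \<subseteq> W\<close> by blast
    show "card (C ` I) \<le> N"
      using card_image_le[OF finite_subset[OF \<open>I \<subseteq> W\<close> \<open>finite W\<close>], of C] \<open>card I \<le> N\<close>
      by linarith
    show "\<Inter>(C ` I) \<inter> W = {}"
    proof (rule equals0I)
      fix x assume x: "x \<in> \<Inter>(C ` I) \<inter> W"
      then obtain w where "w \<in> I" and "inner (a w) x < b w"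
        using cover by blast
      moreover have "b w < inner (a w) x"
        using far x \<open>w \<in> I\<close> \<open>I \<subseteq> W\<close> by blast
      ultimately show False
        by simp
    qed
  qed
qed

lemma helly_prop_if_segment_coloring:
  fixes X :: "'a::euclidean_space set"
  assumes discrete: "\<And>B. bounded B \<Longrightarrow> finite (X \<inter> B)"
    and "segment_coloring X cls" and "finite (cls ` X)" and "card (cls ` X) \<le> N"
  shows "helly_prop X N"
  unfolding helly_prop_def
proof (intro allI impI, elim conjE)
  fix F :: "'a set set"
  assume "finite F" and convex: "\<forall>C\<in>F. convex C"
    and small: "\<forall>G. G \<subseteq> F \<and> card G \<le> N \<longrightarrow> \<Inter>G \<inter> X \<noteq> {}"
  define GG where "GG = {G. G \<subseteq> F \<and> card G \<le> N}"
  have "\<forall>G\<in>GG. \<exists>x. x \<in> \<Inter>G \<inter> X"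
    using small unfolding GG_def by blast
  then obtain q where q: "\<And>G. G \<in> GG \<Longrightarrow> q G \<in> \<Inter>G \<inter> X"
    by metis
  have "finite (q ` GG)"
    using \<open>finite F\<close> by (simp add: GG_def)
  define W where "W = X \<inter> convex hull (q ` GG)"
  have "finite W"
    unfolding W_def by (intro discrete finite_imp_bounded_convex_hull \<open>finite (q ` GG)\<close>)
  have "segment_coloring W cls"
    unfolding W_def using \<open>segment_coloring X cls\<close> by (rule segment_coloring_Int_convex) simp
  have "card (cls ` W) \<le> card (cls ` X)"
    using \<open>finite (cls ` X)\<close> by (rule card_mono) (auto simp: W_def)
  with \<open>card (cls ` X) \<le> N\<close> have "card (cls ` W) \<le> N"
    by linarith
  show "\<Inter>F \<inter> X \<noteq> {}"
  proof
    assume "\<Inter>F \<inter> X = {}"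
    then have "\<Inter>F \<inter> W = {}"
      unfolding W_def by blast
    then obtain G where "G \<subseteq> F" and "card G \<le> N" and "\<Inter>G \<inter> W = {}"
      using helly_finite_segment_coloring[OF \<open>finite W\<close> \<open>segment_coloring W cls\<close> \<open>card (cls ` W) \<le> N\<close> convex]
      by blast
    then have "G \<in> GG"
      by (simp add: GG_def)
    then have "q G \<in> \<Inter>G \<inter> X" and "q G \<in> convex hull (q ` GG)"
      using q by (auto intro: hull_inc)
    then have "q G \<in> \<Inter>G \<inter> W"
      by (simp add: W_def)
    with \<open>\<Inter>G \<inter> W = {}\<close> show False
      by blast
  qed
qed

lemma card_affine_residue_fiber_le_gcd:
  fixes m a c r :: int
  assumes "0 < m"
  shows "card {j \<in> {0..<m}. (a + j * c) mod m = r} \<le> nat (gcd c m)"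
proof -
  define g where "g = gcd c m"
  define q where "q = m div g"
  define F where "F = {j \<in> {0..<m}. (a + j * c) mod m = r}"
  have "0 < g"
    using assms by (simp add: g_def)
  have m_eq: "m = q * g"
    by (simp add: q_def g_def)
  then have "0 < q"
    using assms \<open>0 < g\<close> by (simp add: zero_less_mult_iff)
  have "coprime q (c div g)"
    using div_gcd_coprime[of c m] assms by (simp add: q_def g_def coprime_commute)
  have cong: "q dvd j - j'" if "j \<in> F" "j' \<in> F" for j j'
  proof -
    have "(a + j * c) mod m = (a + j' * c) mod m"
      using that by (simp add: F_def)
    then have "m dvd (a + j * c) - (a + j' * c)"
      by (simp only: mod_eq_dvd_iff)
    then have "m dvd (j - j') * c"
      by (simp add: algebra_simps)
    moreover have "c = (c div g) * g"
      by (simp add: g_def)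
    ultimately have "q * g dvd ((j - j') * (c div g)) * g"
      using m_eq by (metis mult.assoc)
    then have "q dvd (j - j') * (c div g)"
      using \<open>0 < g\<close> by simp
    with \<open>coprime q (c div g)\<close> show ?thesis
      by (simp add: coprime_dvd_mult_left_iff)
  qed
  have "inj_on (\<lambda>j. j div q) F"
  proof (rule inj_onI)
    fix j j' assume "j \<in> F" "j' \<in> F" "j div q = j' div q"
    moreover have "j mod q = j' mod q"
      using cong[OF \<open>j \<in> F\<close> \<open>j' \<in> F\<close>] by (simp add: mod_eq_dvd_iff)
    ultimately show "j = j'"
      by (metis div_mult_mod_eq)
  qed
  moreover have "j div q \<in> {0..<g}" if "j \<in> F" for j
  proof -
    have "j div q * q \<le> j"
      using pos_mod_sign[OF \<open>0 < q\<close>, of j] by (simp add: minus_mod_eq_div_mult [symmetric])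
    also have "j < g * q"
      using that m_eq by (simp add: F_def mult.commute)
    finally have "j div q * q < g * q" .
    then have "j div q < g"
      using \<open>0 < q\<close> by (rule mult_right_less_imp_less[OF _ less_imp_le])
    moreover have "0 \<le> j div q"
      using that \<open>0 < q\<close> by (simp add: F_def pos_imp_zdiv_nonneg_iff)
    ultimately show ?thesis by simp
  qed
  ultimately have "card F \<le> card {0..<g}"
    using card_image[of "\<lambda>j. j div q" F] card_mono[of "{0..<g}" "(\<lambda>j. j div q) ` F"]
    by (simp add: image_subset_iff)
  then show ?thesis
    by (simp add: F_def g_def)
qed

lemma least_prime_factor_le_nontrivial_divisor:
  fixes m d p :: nat
  assumes "d dvd m" and "d \<noteq> 1" and "m \<noteq> 0"
    and least: "\<forall>q. prime q \<and> q dvd m \<longrightarrow> p \<le> q"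
  shows "p \<le> d"
proof -
  obtain q where "prime q" and "q dvd d"
    using prime_factor_nat[OF \<open>d \<noteq> 1\<close>] by blast
  then have "p \<le> q"
    using least \<open>d dvd m\<close> dvd_trans by blast
  also have "q \<le> d"
    using \<open>q dvd d\<close> \<open>d dvd m\<close> \<open>m \<noteq> 0\<close> by (intro dvd_imp_le) auto
  finally show ?thesis .
qed

lemma least_prime_factor_mult_gcd_le:
  fixes m p :: nat and c :: int
  assumes "m \<noteq> 0" and "\<not> int m dvd c"
    and least: "\<forall>q. prime q \<and> q dvd m \<longrightarrow> p \<le> q"
  shows "p * nat (gcd c (int m)) \<le> m"
proof -
  define g where "g = nat (gcd c (int m))"
  have "g dvd m"
    by (simp add: g_def nat_dvd_iff)
  then obtain d where m_eq: "m = g * d"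
    by blast
  have "d \<noteq> 1"
  proof
    assume "d = 1"
    then have "int m = int g"
      using m_eq by simp
    then have "int m = gcd c (int m)"
      by (simp add: g_def)
    then show False
      using \<open>\<not> int m dvd c\<close> by (metis gcd_dvd1)
  qed
  then have "p \<le> d"
    using m_eq \<open>m \<noteq> 0\<close> least by (intro least_prime_factor_le_nontrivial_divisor) auto
  then have "p * g \<le> d * g"
    by simp
  then show ?thesis
    unfolding g_def [symmetric] using m_eq by (metis mult.commute)
qed

lemma card_steps_leaving_residues:
  fixes m p :: nat and a c :: int and S :: "int set"
  assumes "0 < m" and "S \<subseteq> {0..<int m}" and "a mod int m \<in> S"
    and least: "\<forall>q. prime q \<and> q dvd m \<longrightarrow> p \<le> q"
  shows "p * card {j \<in> {1..<int m}. (a + j * c) mod int m \<notin> S} \<le> (m - card S) * m"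
proof (cases "int m dvd c")
  case True
  then have "(a + j * c) mod int m = a mod int m" for j
    by (metis add.right_neutral dvd_imp_mod_0 dvd_mult mod_add_right_eq)
  with \<open>a mod int m \<in> S\<close> show ?thesis
    by simp
next
  case False
  define fiber where "fiber r = {j \<in> {0..<int m}. (a + j * c) mod int m = r}" for r
  define R where "R = {0..<int m} - S"
  have fin: "finite (fiber r)" for r
    by (rule finite_subset[of _ "{0..<int m}"]) (auto simp: fiber_def)
  have "card R = m - card S"
    using \<open>S \<subseteq> {0..<int m}\<close> by (simp add: R_def card_Diff_subset finite_subset)
  have "{j \<in> {1..<int m}. (a + j * c) mod int m \<notin> S} \<subseteq> (\<Union>r\<in>R. fiber r)"
    using \<open>0 < m\<close> by (auto simp: R_def fiber_def)
  then have "card {j \<in> {1..<int m}. (a + j * c) mod int m \<notin> S} \<le> card (\<Union>r\<in>R. fiber r)"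
    by (intro card_mono) (auto simp: R_def fin)
  also have "\<dots> \<le> (\<Sum>r\<in>R. card (fiber r))"
    by (rule card_UN_le) (simp add: R_def)
  also have "\<dots> \<le> card R * nat (gcd c (int m))"
    using sum_bounded_above[of R "\<lambda>r. card (fiber r)" "nat (gcd c (int m))"]
      card_affine_residue_fiber_le_gcd[of "int m"] \<open>0 < m\<close> by (simp add: fiber_def)
  finally have "p * card {j \<in> {1..<int m}. (a + j * c) mod int m \<notin> S}
      \<le> card R * (p * nat (gcd c (int m)))"
    by (simp add: algebra_simps)
  also have "\<dots> \<le> card R * m"
    using least_prime_factor_mult_gcd_le[OF _ False least] \<open>0 < m\<close> by simp
  finally show ?thesis
    using \<open>card R = m - card S\<close> by simp
qed

lemma exists_step_preserving_residues:
  fixes m p :: nat and a c :: "'n::finite \<Rightarrow> int" and S :: "int set"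
  assumes "S \<subseteq> {0..<int m}" and "\<And>i. a i mod int m \<in> S"
    and least: "\<forall>q. prime q \<and> q dvd m \<longrightarrow> p \<le> q"
    and small: "CARD('n) * m * (m - card S) < p * (m - 1)"
  shows "\<exists>j\<in>{1..<int m}. \<forall>i. (a i + j * c i) mod int m \<in> S"
proof (rule ccontr)
  assume none: "\<not> ?thesis"
  have "0 < m"
    using small by (cases m) auto
  define bad where "bad i = {j \<in> {1..<int m}. (a i + j * c i) mod int m \<notin> S}" for i
  have "finite (\<Union>i. bad i)"
    by (rule finite_subset[of _ "{1..<int m}"]) (auto simp: bad_def)
  moreover have "{1..<int m} \<subseteq> (\<Union>i. bad i)"
    using none by (auto simp: bad_def)
  ultimately have "card {1..<int m} \<le> card (\<Union>i. bad i)"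
    by (rule card_mono)
  then have "m - 1 \<le> card (\<Union>i. bad i)"
    by simp
  also have "\<dots> \<le> (\<Sum>i\<in>UNIV. card (bad i))"
    by (rule card_UN_le) simp
  finally have "p * (m - 1) \<le> (\<Sum>i\<in>UNIV. p * card (bad i))"
    by (simp add: sum_distrib_left [symmetric])
  also have "\<dots> \<le> CARD('n) * ((m - card S) * m)"
    using sum_bounded_above[of UNIV "\<lambda>i. p * card (bad i)" "(m - card S) * m"]
      card_steps_leaving_residues[OF \<open>0 < m\<close> assms(1,2) least] by (simp add: bad_def)
  finally show False
    using small by (simp add: algebra_simps)
qed

lemma residue_class_union_eq:
  fixes m :: nat and S :: "int set"
  assumes "S \<subseteq> {0..<int m}"
  shows "{real_of_int (s + int m * n) | s n. s \<in> S \<and> n \<in> (UNIV :: int set)}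
    = real_of_int ` {z. z mod int m \<in> S}"
proof (intro equalityI subsetI)
  fix y assume "y \<in> {real_of_int (s + int m * n) | s n. s \<in> S \<and> n \<in> (UNIV :: int set)}"
  then obtain s n where "s \<in> S" and y: "y = real_of_int (s + int m * n)"
    by blast
  have "s mod int m = s"
    using \<open>s \<in> S\<close> assms by (auto intro: mod_pos_pos_trivial)
  with \<open>s \<in> S\<close> have "(s + int m * n) mod int m \<in> S"
    by simp
  then show "y \<in> real_of_int ` {z. z mod int m \<in> S}"
    unfolding y by (intro imageI) simp
next
  fix y assume "y \<in> real_of_int ` {z. z mod int m \<in> S}"
  then obtain z where "z mod int m \<in> S" and "y = real_of_int (z mod int m + int m * (z div int m))"
    by auto
  then show "y \<in> {real_of_int (s + int m * n) | s n. s \<in> S \<and> n \<in> (UNIV :: int set)}"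
    by blast
qed

lemma finite_cart_power:
  assumes "finite T"
  shows "finite (cart_power T :: (real ^ 'n) set)"
proof -
  have "(cart_power T :: (real ^ 'n) set) \<subseteq> vec_lambda ` (UNIV \<rightarrow>\<^sub>E T)"
  proof
    fix x :: "real ^ 'n" assume "x \<in> cart_power T"
    then have "vec_nth x \<in> UNIV \<rightarrow>\<^sub>E T"
      by (simp add: cart_power_def PiE_UNIV_domain)
    then show "x \<in> vec_lambda ` (UNIV \<rightarrow>\<^sub>E T)"
      by (metis image_eqI vec_nth_inverse)
  qed
  moreover have "finite (vec_lambda ` (UNIV \<rightarrow>\<^sub>E T) :: (real ^ 'n) set)"
    using assms by (simp add: finite_PiE)
  ultimately show ?thesis
    by (rule finite_subset)
qed

lemma finite_cart_power_Int_bounded: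
  assumes "A \<subseteq> \<int>" and "bounded B"
  shows "finite (cart_power A \<inter> B :: (real ^ 'n) set)"
proof -
  obtain r where r: "\<And>x. x \<in> B \<Longrightarrow> norm x \<le> r"
    using \<open>bounded B\<close> by (auto simp: bounded_iff)
  define T where "T = real_of_int ` {-\<lceil>r\<rceil>..\<lceil>r\<rceil>}"
  have "cart_power A \<inter> B \<subseteq> cart_power T"
  proof (clarsimp simp: cart_power_def)
    fix x :: "real ^ 'n" and i
    assume "\<forall>i. x $ i \<in> A" and "x \<in> B"
    then obtain z where z: "x $ i = real_of_int z"
      using \<open>A \<subseteq> \<int>\<close> by (blast elim: Ints_cases)
    have "\<bar>real_of_int z\<bar> \<le> r"
      using component_le_norm_cart[of x i] r[OF \<open>x \<in> B\<close>] z by simp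
    then have "z \<in> {-\<lceil>r\<rceil>..\<lceil>r\<rceil>}"
      by (auto simp: abs_le_iff) linarith+
    then show "x $ i \<in> T"
      using z by (simp add: T_def)
  qed
  moreover have "finite (cart_power T :: (real ^ 'n) set)"
    by (rule finite_cart_power) (simp add: T_def)
  ultimately show ?thesis
    by (rule finite_subset)
qed

lemma mem_of_int_residues:
  "y \<in> real_of_int ` {z. z mod m \<in> S} \<longleftrightarrow> y = real_of_int \<lfloor>y\<rfloor> \<and> \<lfloor>y\<rfloor> mod m \<in> S"
proof
  assume "y \<in> real_of_int ` {z. z mod m \<in> S}"
  then show "y = real_of_int \<lfloor>y\<rfloor> \<and> \<lfloor>y\<rfloor> mod m \<in> S"
    by auto
next
  assume "y = real_of_int \<lfloor>y\<rfloor> \<and> \<lfloor>y\<rfloor> mod m \<in> S"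
  then show "y \<in> real_of_int ` {z. z mod m \<in> S}"
    by (metis image_eqI mem_Collect_eq)
qed

lemma mem_cart_power_residues:
  "x \<in> cart_power (real_of_int ` {z. z mod m \<in> S})
    \<longleftrightarrow> (\<forall>i. x $ i = real_of_int \<lfloor>x $ i\<rfloor> \<and> \<lfloor>x $ i\<rfloor> mod m \<in> S)"
  by (simp add: cart_power_def mem_of_int_residues)

definition coord_residues :: "int \<Rightarrow> real ^ 'n \<Rightarrow> 'n \<Rightarrow> int" where
  "coord_residues m x = (\<lambda>i. \<lfloor>x $ i\<rfloor> mod m)"

lemma coord_residues_cart_power:
  fixes S :: "int set"
  assumes "finite S"
  shows "finite (coord_residues m ` cart_power (real_of_int ` {z. z mod m \<in> S}) :: ('n::finite \<Rightarrow> int) set)"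
      (is "finite ?C")
    and "card (coord_residues m ` cart_power (real_of_int ` {z. z mod m \<in> S}) :: ('n \<Rightarrow> int) set)
      \<le> card S ^ CARD('n)"
proof -
  have "?C \<subseteq> UNIV \<rightarrow>\<^sub>E S"
    by (auto simp: coord_residues_def mem_cart_power_residues)
  moreover have "finite (UNIV \<rightarrow>\<^sub>E S :: ('n \<Rightarrow> int) set)"
    using assms by (simp add: finite_PiE)
  ultimately show "finite ?C"
    by (rule finite_subset)
  have "card ?C \<le> card (UNIV \<rightarrow>\<^sub>E S :: ('n \<Rightarrow> int) set)"
    using \<open>finite (UNIV \<rightarrow>\<^sub>E S)\<close> \<open>?C \<subseteq> UNIV \<rightarrow>\<^sub>E S\<close> by (rule card_mono)
  then show "card ?C \<le> card S ^ CARD('n)"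
    by (simp add: card_PiE)
qed

lemma segment_coloring_residue_grid:
  fixes m p :: nat and S :: "int set"
  assumes "S \<subseteq> {0..<int m}"
    and least: "\<forall>q. prime q \<and> q dvd m \<longrightarrow> p \<le> q"
    and small: "CARD('n::finite) * m * (m - card S) < p * (m - 1)"
  shows "segment_coloring (cart_power (real_of_int ` {z. z mod int m \<in> S}) :: (real ^ 'n) set)
    (coord_residues (int m))"
  unfolding segment_coloring_def
proof (intro ballI impI, elim conjE)
  let ?X = "cart_power (real_of_int ` {z. z mod int m \<in> S}) :: (real ^ 'n) set"
  fix x y assume "x \<in> ?X" "y \<in> ?X" "x \<noteq> y" and same: "coord_residues (int m) x = coord_residues (int m) y"
  have "0 < m"
    using small by (cases m) auto
  define a where "a i = \<lfloor>x $ i\<rfloor>" for i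
  define c where "c i = (\<lfloor>y $ i\<rfloor> - \<lfloor>x $ i\<rfloor>) div int m" for i
  have x_eq: "x $ i = real_of_int (a i)" and a_S: "a i mod int m \<in> S" for i
    using \<open>x \<in> ?X\<close> by (auto simp: mem_cart_power_residues a_def)
  have y_eq: "y $ i = real_of_int (a i + int m * c i)" for i
  proof -
    have "int m dvd \<lfloor>y $ i\<rfloor> - \<lfloor>x $ i\<rfloor>"
      using fun_cong[OF same, of i] by (simp add: coord_residues_def mod_eq_dvd_iff dvd_diff_commute)
    moreover have "y $ i = real_of_int \<lfloor>y $ i\<rfloor>"
      using \<open>y \<in> ?X\<close> by (auto simp: mem_cart_power_residues)
    ultimately show ?thesis
      by (simp add: a_def c_def)
  qed
  obtain j where j: "j \<in> {1..<int m}" and j_S: "\<And>i. (a i + j * c i) mod int m \<in> S"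
    using exists_step_preserving_residues[where a = a and c = c, OF assms(1) a_S least small] by blast
  define t where "t = real_of_int j / real m"
  have "0 < t" "t < 1"
    using j by (auto simp: t_def field_simps)
  have coord: "((1 - t) *\<^sub>R x + t *\<^sub>R y) $ i = real_of_int (a i + j * c i)" for i
    using \<open>0 < m\<close> by (simp add: x_eq y_eq t_def field_simps)
  have "((1 - t) *\<^sub>R x + t *\<^sub>R y) $ i \<in> real_of_int ` {z. z mod int m \<in> S}" for i
    unfolding coord using j_S[of i] by (intro imageI) simp
  then have "(1 - t) *\<^sub>R x + t *\<^sub>R y \<in> ?X"
    by (simp add: cart_power_def)
  moreover have "(1 - t) *\<^sub>R x + t *\<^sub>R y \<in> open_segment x y"
    using \<open>0 < t\<close> \<open>t < 1\<close> \<open>x \<noteq> y\<close> by (auto simp: in_segment)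
  ultimately show "open_segment x y \<inter> ?X \<noteq> {}"
    by blast
qed

theorem theorem3:
  fixes m p k :: nat and S :: "int set"
  assumes "m \<ge> 2"
    and "prime p" and "p dvd m"
    and "\<forall>q. prime q \<and> q dvd m \<longrightarrow> p \<le> q"
    and "k > 0"
    and "S \<subseteq> {0..<int m}" and "card S = k"
    and "CARD('n::finite) * m * (m - k) < p * (m - 1)"
  shows "helly_number (cart_power {real_of_int (s + int m * n) | s n. s \<in> S \<and> n \<in> (UNIV::int set)}
           :: (real ^ 'n) set) \<le> enat (k ^ CARD('n))"
proof -
  let ?X = "cart_power (real_of_int ` {z. z mod int m \<in> S}) :: (real ^ 'n) set"
  have "finite S"
    using \<open>S \<subseteq> {0..<int m}\<close> by (rule finite_subset) simp
  have "helly_prop ?X (k ^ CARD('n))"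
  proof (rule helly_prop_if_segment_coloring)
    show "finite (?X \<inter> B)" if "bounded B" for B
      using that by (intro finite_cart_power_Int_bounded) auto
    show "segment_coloring ?X (coord_residues (int m))"
      using segment_coloring_residue_grid assms(4,6-8) by blast
    show "finite (coord_residues (int m) ` ?X)"
      using coord_residues_cart_power(1)[OF \<open>finite S\<close>] .
    show "card (coord_residues (int m) ` ?X) \<le> k ^ CARD('n)"
      using coord_residues_cart_power(2)[OF \<open>finite S\<close>] \<open>card S = k\<close> by simp
  qed
  then have "helly_number ?X \<le> enat (k ^ CARD('n))"
    unfolding helly_number_def by (intro Inf_lower) blast
  then show ?thesis
    using residue_class_union_eq[OF \<open>S \<subseteq> {0..<int m}\<close>] by simp
qed

end
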